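(* Let $Z$ be a uniform read-$d$-times NBP and let $P_1,P_2$ be two directed paths of $Z$ having the same initial vertex and the same final vertex. Then a variable labels some edge of $P_1$ if and only if it labels some edge of $P_2$.
   Context: An NBP $Z$ is a directed acyclic multigraph with one source and one sink, some of whose edges are labelled with literals. $Z$ is read-$d$-times if each variable labels at most $d$ edges on each source-sink path, and uniform if each variable (of those labelling edges of $Z$) labels exactly $d$ edges on each source-sink path. *)

theory Defs
  imports Main
begin

text \<open>An NBP is given by a finite vertex set V, a finite edge set E (multigraph: edges are
  abstract objects with tail/head maps), a partial labelling of edges by literals
  (a literal is a pair (variable, polarity)), a source s and a sink t.\<close>

fun dpath :: "'e set \<Rightarrow> ('e \<Rightarrow> 'v) \<Rightarrow> ('e \<Rightarrow> 'v) \<Rightarrow> 'v \<Rightarrow> 'e list \<Rightarrow> 'v \<Rightarrow> bool" where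
  "dpath E tail head u [] v = (u = v)"
| "dpath E tail head u (e # es) v = (e \<in> E \<and> tail e = u \<and> dpath E tail head (head e) es v)"

definition is_NBP :: "'v set \<Rightarrow> 'e set \<Rightarrow> ('e \<Rightarrow> 'v) \<Rightarrow> ('e \<Rightarrow> 'v) \<Rightarrow> 'v \<Rightarrow> 'v \<Rightarrow> bool" where
  "is_NBP V E tail head s t \<longleftrightarrow>
     finite V \<and> finite E \<and> (\<forall>e\<in>E. tail e \<in> V \<and> head e \<in> V) \<and>
     {v \<in> V. \<not> (\<exists>e\<in>E. head e = v)} = {s} \<and>
     {v \<in> V. \<not> (\<exists>e\<in>E. tail e = v)} = {t} \<and>
     (\<forall>v es. v \<in> V \<longrightarrow> dpath E tail head v es v \<longrightarrow> es = [])"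

definition labels :: "('e \<Rightarrow> ('x \<times> bool) option) \<Rightarrow> 'x \<Rightarrow> 'e \<Rightarrow> bool" where
  "labels lab x e \<longleftrightarrow> (\<exists>b. lab e = Some (x, b))"

definition count_var :: "('e \<Rightarrow> ('x \<times> bool) option) \<Rightarrow> 'x \<Rightarrow> 'e list \<Rightarrow> nat" where
  "count_var lab x es = length (filter (labels lab x) es)"

definition read_d_times ::
  "'e set \<Rightarrow> ('e \<Rightarrow> 'v) \<Rightarrow> ('e \<Rightarrow> 'v) \<Rightarrow> ('e \<Rightarrow> ('x \<times> bool) option) \<Rightarrow> 'v \<Rightarrow> 'v \<Rightarrow> nat \<Rightarrow> bool" where
  "read_d_times E tail head lab s t d \<longleftrightarrow>
     (\<forall>p x. dpath E tail head s p t \<longrightarrow> count_var lab x p \<le> d)"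

definition uniform_NBP ::
  "'e set \<Rightarrow> ('e \<Rightarrow> 'v) \<Rightarrow> ('e \<Rightarrow> 'v) \<Rightarrow> ('e \<Rightarrow> ('x \<times> bool) option) \<Rightarrow> 'v \<Rightarrow> 'v \<Rightarrow> nat \<Rightarrow> bool" where
  "uniform_NBP E tail head lab s t d \<longleftrightarrow>
     (\<forall>p x. dpath E tail head s p t \<longrightarrow> (\<exists>e\<in>E. labels lab x e) \<longrightarrow> count_var lab x p = d)"

end

theory Submission
  imports Defs
begin

text \<open>Extend both paths by a common path from the source to u and a common path from v to the
  sink; such paths exist because every vertex of a finite acyclic graph with a unique source and
  a unique sink lies on a source-sink path. Uniformity gives both extended paths the same number
  of occurrences of x, so P1 and P2 themselves contain x equally often.\<close>

lemma dpath_append: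
  "dpath E tail head u (p @ q) w \<longleftrightarrow> (\<exists>m. dpath E tail head u p m \<and> dpath E tail head m q w)"
  by (induction p arbitrary: u) auto

lemma dpath_rev:
  "dpath E head tail v (rev p) u \<longleftrightarrow> dpath E tail head u p v"
  by (induction p arbitrary: u) (auto simp: dpath_append)

lemma dpath_subset_edges: "dpath E tail head u p v \<Longrightarrow> set p \<subseteq> E"
  by (induction p arbitrary: u) auto

lemma dpath_endpoints_in_vertices:
  assumes "dpath E tail head u p v" and "p \<noteq> []"
    and "\<forall>e\<in>E. tail e \<in> V \<and> head e \<in> V"
  shows "u \<in> V \<and> v \<in> V"
  using assms(1,2)
proof (induction p arbitrary: u)
  case (Cons e es)
  then show ?case using assms(3) by (cases "es = []") auto
qed simp

lemma dpath_of_trancl: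
  assumes "(a, b) \<in> ((\<lambda>e. (tail e, head e)) ` E)\<^sup>+"
  shows "\<exists>es. es \<noteq> [] \<and> dpath E tail head a es b"
  using assms
proof (induction rule: trancl_induct)
  case (base b)
  then obtain e where "e \<in> E" "a = tail e" "b = head e" by auto
  then show ?case by (intro exI[of _ "[e]"]) auto
next
  case (step b c)
  then obtain es e where "dpath E tail head a es b" "e \<in> E" "b = tail e" "c = head e" by auto
  then show ?case by (intro exI[of _ "es @ [e]"]) (auto simp: dpath_append)
qed

lemma reachable_from_unique_source:
  assumes "finite E" and "\<forall>e\<in>E. tail e \<in> V"
    and acyclic: "\<And>w es. w \<in> V \<Longrightarrow> dpath E tail head w es w \<Longrightarrow> es = []"
    and source: "\<And>w. w \<in> V \<Longrightarrow> w \<noteq> s \<Longrightarrow> \<exists>e\<in>E. head e = w"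
    and "w \<in> V"
  shows "\<exists>p. dpath E tail head s p w"
proof -
  define R where "R = (\<lambda>e. (tail e, head e)) ` E"
  have "acyclic R"
    unfolding acyclic_def
  proof (intro allI notI)
    fix a assume "(a, a) \<in> R\<^sup>+"
    then obtain e es where cycle: "dpath E tail head a (e # es) a"
      unfolding R_def by (metis dpath_of_trancl neq_Nil_conv)
    then have "a \<in> V" using assms(2) by auto
    with cycle acyclic show False by blast
  qed
  then have "wf R" using \<open>finite E\<close> by (intro finite_acyclic_wf) (simp add: R_def)
  then show ?thesis using \<open>w \<in> V\<close>
  proof (induction w rule: wf_induct_rule)
    case (less w)
    show ?case
    proof (cases "w = s")
      case False
      then obtain e where e: "e \<in> E" "head e = w" using source less.prems by blast
      then have "(tail e, w) \<in> R" "tail e \<in> V" using assms(2) by (auto simp: R_def)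
      then obtain p where "dpath E tail head s p (tail e)" using less.IH by blast
      with e show ?thesis by (intro exI[of _ "p @ [e]"]) (auto simp: dpath_append)
    qed (auto intro: exI[of _ "[]"])
  qed
qed

lemma NBP_source_reaches:
  assumes "is_NBP V E tail head s t" and "w \<in> V"
  shows "\<exists>p. dpath E tail head s p w"
  using assms by (intro reachable_from_unique_source[where V = V]) (auto simp: is_NBP_def)

lemma NBP_reaches_sink:
  assumes "is_NBP V E tail head s t" and "w \<in> V"
  shows "\<exists>p. dpath E tail head w p t"
proof -
  have "\<exists>p. dpath E head tail t p w"
  proof (rule reachable_from_unique_source[where V = V])
    show "es = []" if "w' \<in> V" "dpath E head tail w' es w'" for w' es
      using that assms(1) dpath_rev[of E head tail w' "rev es" w']
      by (auto simp: is_NBP_def)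
  qed (use assms in \<open>auto simp: is_NBP_def\<close>)
  then show ?thesis by (metis dpath_rev)
qed

lemma count_var_pos_iff: "0 < count_var lab x p \<longleftrightarrow> (\<exists>e\<in>set p. labels lab x e)"
  unfolding count_var_def by (metis filter_empty_conv length_greater_0_conv)

lemma uniform_NBP_count_var_eq:
  assumes "is_NBP V E tail head s t" and "uniform_NBP E tail head lab s t d"
    and "dpath E tail head u P1 v" and "dpath E tail head u P2 v"
    and "u \<in> V" and "v \<in> V" and "\<exists>e\<in>E. labels lab x e"
  shows "count_var lab x P1 = count_var lab x P2"
proof -
  obtain A B where "dpath E tail head s A u" "dpath E tail head v B t"
    using NBP_source_reaches NBP_reaches_sink assms(1,5,6) by metis
  then have "dpath E tail head s (A @ P1 @ B) t" "dpath E tail head s (A @ P2 @ B) t"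
    using assms(3,4) by (auto simp: dpath_append)
  then have "count_var lab x (A @ P1 @ B) = count_var lab x (A @ P2 @ B)"
    using assms(2,7) by (simp add: uniform_NBP_def)
  then show ?thesis by (simp add: count_var_def)
qed

theorem lemma2:
  fixes V :: "'v set" and E :: "'e set" and tail head :: "'e \<Rightarrow> 'v"
    and lab :: "'e \<Rightarrow> ('x \<times> bool) option" and s t u v :: 'v and d :: nat
    and P1 P2 :: "'e list" and x :: 'x
  assumes "is_NBP V E tail head s t"
    and "read_d_times E tail head lab s t d"
    and "uniform_NBP E tail head lab s t d"
    and "dpath E tail head u P1 v"
    and "dpath E tail head u P2 v"
  shows "(\<exists>e\<in>set P1. labels lab x e) \<longleftrightarrow> (\<exists>e\<in>set P2. labels lab x e)"
proof -
  have transfer: "\<exists>e\<in>set Q. labels lab x e"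
    if P: "dpath E tail head u P v" and Q: "dpath E tail head u Q v"
      and labelled: "\<exists>e\<in>set P. labels lab x e" for P Q
  proof -
    have "P \<noteq> []" using labelled by auto
    moreover have "\<forall>e\<in>E. tail e \<in> V \<and> head e \<in> V" using assms(1) by (simp add: is_NBP_def)
    ultimately have "u \<in> V \<and> v \<in> V" by (rule dpath_endpoints_in_vertices[OF P])
    moreover have "\<exists>e\<in>E. labels lab x e"
      using labelled dpath_subset_edges[OF P] by blast
    ultimately have "count_var lab x P = count_var lab x Q"
      using uniform_NBP_count_var_eq[OF assms(1,3) P Q] by blast
    with labelled show ?thesis by (metis count_var_pos_iff)
  qed
  show ?thesis using transfer assms(4,5) by blast
qed

end
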